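(* Let $G$ be a finite group, $(C_1,C_2,C_3,C_4)$ a class vector of $G$ and $\rho_4$ the permutation representation of the pure braid group $B_4$ on $\Sigma^i(C_1,C_2,C_3,C_4)$. If $\rho_4(\beta_{12})$, $\rho_4(\beta_{13})$ and $\rho_4(\beta_{14})$ are involutions, then $\rho_4(B_4)\cong C_2\times C_2$.
   Context: A class vector is a tuple of non-trivial conjugacy classes. $\Sigma^i(C_1,\dots,C_4)$ is the set of $G$-conjugacy classes $[\sigma_1,\dots,\sigma_4]$ (simultaneous conjugation) of tuples with $\sigma_j\in C_j$, $\langle\sigma_1,\dots,\sigma_4\rangle=G$, $\sigma_1\sigma_2\sigma_3\sigma_4=\iota$ ($\iota$ the identity). The Hurwitz braid group $H_4=\langle\beta_2,\beta_3,\beta_4\rangle$ acts from the right by $[\underline{\sigma}]^{\beta_2}=[\sigma_1\sigma_2\sigma_1^{-1},\sigma_1,\sigma_3,\sigma_4]$, $[\underline{\sigma}]^{\beta_3}=[\sigma_1,\sigma_2\sigma_3\sigma_2^{-1},\sigma_2,\sigma_4]$, $[\underline{\sigma}]^{\beta_4}=[\sigma_1,\sigma_2,\sigma_3\sigma_4\sigma_3^{-1},\sigma_3]$. The pure braid group $B_4$ is generated by $\beta_{12}=\beta_2^2$, $\beta_{13}=\beta_2^{-1}\beta_3^2\beta_2$, $\beta_{14}=\beta_2^{-1}\beta_3^{-1}\beta_4^2\beta_3\beta_2$, $\beta_{23}=\beta_3^2$, $\beta_{24}=\beta_3^{-1}\beta_4^2\beta_3$, $\beta_{34}=\beta_4^2$,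 and preserves $\Sigma^i(C_1,\dots,C_4)$. An involution is an element of order $2$. *)

theory Defs
  imports "HOL-Algebra.Algebra"
begin

definition conj_class :: "('a, 'b) monoid_scheme \<Rightarrow> 'a \<Rightarrow> 'a set" where
  "conj_class G g = (\<lambda>h. h \<otimes>\<^bsub>G\<^esub> g \<otimes>\<^bsub>G\<^esub> inv\<^bsub>G\<^esub> h) ` carrier G"

definition is_conj_class :: "('a, 'b) monoid_scheme \<Rightarrow> 'a set \<Rightarrow> bool" where
  "is_conj_class G C \<longleftrightarrow> (\<exists>g \<in> carrier G. C = conj_class G g)"

definition nontrivial_conj_class :: "('a, 'b) monoid_scheme \<Rightarrow> 'a set \<Rightarrow> bool" where
  "nontrivial_conj_class G C \<longleftrightarrow> is_conj_class G C \<and> C \<noteq> {\<one>\<^bsub>G\<^esub>}"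

type_synonym 'a tuple4 = "'a \<times> 'a \<times> 'a \<times> 'a"

fun tconj :: "('a, 'b) monoid_scheme \<Rightarrow> 'a \<Rightarrow> 'a tuple4 \<Rightarrow> 'a tuple4" where
  "tconj G h (a, b, c, d) =
     (h \<otimes>\<^bsub>G\<^esub> a \<otimes>\<^bsub>G\<^esub> inv\<^bsub>G\<^esub> h, h \<otimes>\<^bsub>G\<^esub> b \<otimes>\<^bsub>G\<^esub> inv\<^bsub>G\<^esub> h,
      h \<otimes>\<^bsub>G\<^esub> c \<otimes>\<^bsub>G\<^esub> inv\<^bsub>G\<^esub> h, h \<otimes>\<^bsub>G\<^esub> d \<otimes>\<^bsub>G\<^esub> inv\<^bsub>G\<^esub> h)"

definition tclass :: "('a, 'b) monoid_scheme \<Rightarrow> 'a tuple4 \<Rightarrow> 'a tuple4 set" where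
  "tclass G s = (\<lambda>h. tconj G h s) ` carrier G"

definition Ni :: "('a, 'b) monoid_scheme \<Rightarrow> 'a set \<Rightarrow> 'a set \<Rightarrow> 'a set \<Rightarrow> 'a set \<Rightarrow> 'a tuple4 set" where
  "Ni G C1 C2 C3 C4 = {(a, b, c, d). a \<in> C1 \<and> b \<in> C2 \<and> c \<in> C3 \<and> d \<in> C4 \<and>
      a \<otimes>\<^bsub>G\<^esub> b \<otimes>\<^bsub>G\<^esub> c \<otimes>\<^bsub>G\<^esub> d = \<one>\<^bsub>G\<^esub> \<and>
      generate G {a, b, c, d} = carrier G}"

definition Sigma_i :: "('a, 'b) monoid_scheme \<Rightarrow> 'a set \<Rightarrow> 'a set \<Rightarrow> 'a set \<Rightarrow> 'a set \<Rightarrow> 'a tuple4 set set" where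
  "Sigma_i G C1 C2 C3 C4 = tclass G ` Ni G C1 C2 C3 C4"

fun hb2 :: "('a, 'b) monoid_scheme \<Rightarrow> 'a tuple4 \<Rightarrow> 'a tuple4" where
  "hb2 G (a, b, c, d) = (a \<otimes>\<^bsub>G\<^esub> b \<otimes>\<^bsub>G\<^esub> inv\<^bsub>G\<^esub> a, a, c, d)"
fun hb3 :: "('a, 'b) monoid_scheme \<Rightarrow> 'a tuple4 \<Rightarrow> 'a tuple4" where
  "hb3 G (a, b, c, d) = (a, b \<otimes>\<^bsub>G\<^esub> c \<otimes>\<^bsub>G\<^esub> inv\<^bsub>G\<^esub> b, b, d)"
fun hb4 :: "('a, 'b) monoid_scheme \<Rightarrow> 'a tuple4 \<Rightarrow> 'a tuple4" where
  "hb4 G (a, b, c, d) = (a, b, c \<otimes>\<^bsub>G\<^esub> d \<otimes>\<^bsub>G\<^esub> inv\<^bsub>G\<^esub> c, c)"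

fun hb2inv :: "('a, 'b) monoid_scheme \<Rightarrow> 'a tuple4 \<Rightarrow> 'a tuple4" where
  "hb2inv G (a, b, c, d) = (b, inv\<^bsub>G\<^esub> b \<otimes>\<^bsub>G\<^esub> a \<otimes>\<^bsub>G\<^esub> b, c, d)"
fun hb3inv :: "('a, 'b) monoid_scheme \<Rightarrow> 'a tuple4 \<Rightarrow> 'a tuple4" where
  "hb3inv G (a, b, c, d) = (a, c, inv\<^bsub>G\<^esub> c \<otimes>\<^bsub>G\<^esub> b \<otimes>\<^bsub>G\<^esub> c, d)"

text \<open>Pure braid generators acting on tuples (right action: a word is applied
  from left to right).\<close>

definition pb12 :: "('a, 'b) monoid_scheme \<Rightarrow> 'a tuple4 \<Rightarrow> 'a tuple4" where
  "pb12 G s = hb2 G (hb2 G s)"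
definition pb13 :: "('a, 'b) monoid_scheme \<Rightarrow> 'a tuple4 \<Rightarrow> 'a tuple4" where
  "pb13 G s = hb2 G (hb3 G (hb3 G (hb2inv G s)))"
definition pb14 :: "('a, 'b) monoid_scheme \<Rightarrow> 'a tuple4 \<Rightarrow> 'a tuple4" where
  "pb14 G s = hb2 G (hb3 G (hb4 G (hb4 G (hb3inv G (hb2inv G s)))))"
definition pb23 :: "('a, 'b) monoid_scheme \<Rightarrow> 'a tuple4 \<Rightarrow> 'a tuple4" where
  "pb23 G s = hb3 G (hb3 G s)"
definition pb24 :: "('a, 'b) monoid_scheme \<Rightarrow> 'a tuple4 \<Rightarrow> 'a tuple4" where
  "pb24 G s = hb3 G (hb4 G (hb4 G (hb3inv G s)))"
definition pb34 :: "('a, 'b) monoid_scheme \<Rightarrow> 'a tuple4 \<Rightarrow> 'a tuple4" where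
  "pb34 G s = hb4 G (hb4 G s)"

text \<open>The permutation induced on a set S of classes: [sigma] maps to [f sigma]
  (the image of the class of sigma under f is the class of f sigma, since f
  commutes with simultaneous conjugation). Extensional, as in BijGroup.\<close>

definition rho :: "'c set set \<Rightarrow> ('c \<Rightarrow> 'c) \<Rightarrow> 'c set \<Rightarrow> 'c set" where
  "rho S f = restrict (\<lambda>Y. f ` Y) S"

definition rho4_gens :: "('a, 'b) monoid_scheme \<Rightarrow> 'a set \<Rightarrow> 'a set \<Rightarrow> 'a set \<Rightarrow> 'a set
    \<Rightarrow> ('a tuple4 set \<Rightarrow> 'a tuple4 set) set" where
  "rho4_gens G C1 C2 C3 C4 = (let S = Sigma_i G C1 C2 C3 C4 in
     {rho S (pb12 G), rho S (pb13 G), rho S (pb14 G),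
      rho S (pb23 G), rho S (pb24 G), rho S (pb34 G)})"

definition rho4_image :: "('a, 'b) monoid_scheme \<Rightarrow> 'a set \<Rightarrow> 'a set \<Rightarrow> 'a set \<Rightarrow> 'a set
    \<Rightarrow> ('a tuple4 set \<Rightarrow> 'a tuple4 set) monoid" where
  "rho4_image G C1 C2 C3 C4 = (let S = Sigma_i G C1 C2 C3 C4 in
     (BijGroup S)\<lparr>carrier := generate (BijGroup S) (rho4_gens G C1 C2 C3 C4)\<rparr>)"

end

theory Submission
  imports Defs
begin

(* Write r_ij for the permutation of Sigma^i induced by beta_ij. On a tuple (a, b, c, (abc)^-1),
   a direct computation shows that, up to simultaneous conjugation, beta_34 acts as beta_12 and
   beta_23 as beta_14, while r_12 o r_24 = r_13 o r_12 and r_14 o r_13 o r_12 = id (the last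
   composite is conjugation by a). Three involutions with product 1 commute pairwise, so
   r_14 = r_12 r_13 and r_24 = r_12 r_13 r_12 = r_13: the image is {1, r_12, r_13, r_12 r_13}, a
   Klein four group because r_12, r_13, r_14 are non-trivial. The r_ij are permutations because
   the Hurwitz moves are injective on the finite set of 4-tuples. *)

lemma (in group) ord_eq_2D:
  assumes "x \<in> carrier G" and "ord x = 2"
  shows "x \<otimes> x = \<one>" and "x \<noteq> \<one>"
proof -
  show "x \<otimes> x = \<one>"
    using pow_ord_eq_1[OF assms(1)] assms by (simp add: numeral_2_eq_2)
  show "x \<noteq> \<one>"
    using ord_eq_1[OF assms(1)] assms(2) by simp
qed

lemma (in group) involutions_with_product_one:
  assumes "a \<in> carrier G" "b \<in> carrier G" "c \<in> carrier G"
    and "a \<otimes> a = \<one>" "b \<otimes> b = \<one>" "c \<otimes> c = \<one>" and "c \<otimes> (b \<otimes> a) = \<one>"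
  shows "c = a \<otimes> b" and "a \<otimes> b = b \<otimes> a"
proof -
  have inv_a: "inv a = a" and inv_b: "inv b = b" and inv_c: "inv c = c"
    using assms inv_equality by blast+
  have "c = inv (b \<otimes> a)"
    using assms inv_equality by (metis m_closed)
  then show c: "c = a \<otimes> b"
    using assms inv_a inv_b by (simp add: inv_mult_group)
  show "a \<otimes> b = b \<otimes> a"
    using inv_c assms inv_a inv_b by (simp add: c inv_mult_group)
qed

lemma (in group) commuting_involutions_products:
  assumes a: "a \<in> carrier G" and b: "b \<in> carrier G"
    and aa: "a \<otimes> a = \<one>" and bb: "b \<otimes> b = \<one>" and comm: "a \<otimes> b = b \<otimes> a"
  shows "a \<otimes> (a \<otimes> b) = b" "a \<otimes> b \<otimes> b = a" "b \<otimes> (a \<otimes> b) = a" "a \<otimes> b \<otimes> a = b"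
    and "a \<otimes> b \<otimes> (a \<otimes> b) = \<one>"
proof -
  show ab: "a \<otimes> (a \<otimes> b) = b" "a \<otimes> b \<otimes> b = a"
    using a b aa bb by (simp_all flip: m_assoc) (simp add: m_assoc)
  then show "b \<otimes> (a \<otimes> b) = a" and aba: "a \<otimes> b \<otimes> a = b"
    using comm a b by (metis m_assoc)+
  show "a \<otimes> b \<otimes> (a \<otimes> b) = \<one>"
    using aba a b bb by (simp flip: m_assoc)
qed

lemma (in group) generate_commuting_involutions:
  assumes a: "a \<in> carrier G" and b: "b \<in> carrier G"
    and aa: "a \<otimes> a = \<one>" and bb: "b \<otimes> b = \<one>" and comm: "a \<otimes> b = b \<otimes> a"
  shows "generate G {a, b, a \<otimes> b} = {\<one>, a, b, a \<otimes> b}"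
proof
  note products = commuting_involutions_products[OF assms]
  moreover have "inv a = a" "inv b = b" "inv (a \<otimes> b) = a \<otimes> b"
    using a b aa bb products inv_equality by blast+
  ultimately have "subgroup {\<one>, a, b, a \<otimes> b} G"
    using a b aa bb comm by (intro subgroupI) auto
  then show "generate G {a, b, a \<otimes> b} \<subseteq> {\<one>, a, b, a \<otimes> b}"
    by (rule generate_subgroup_incl[rotated]) auto
  show "{\<one>, a, b, a \<otimes> b} \<subseteq> generate G {a, b, a \<otimes> b}"
    by (auto intro: generate.intros)
qed

lemma (in group) generate_commuting_involutions_iso:
  assumes a: "a \<in> carrier G" and b: "b \<in> carrier G"
    and aa: "a \<otimes> a = \<one>" and bb: "b \<otimes> b = \<one>" and comm: "a \<otimes> b = b \<otimes> a"
    and "a \<noteq> \<one>" "b \<noteq> \<one>" "a \<otimes> b \<noteq> \<one>"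
  shows "G\<lparr>carrier := generate G {a, b, a \<otimes> b}\<rparr> \<cong> integer_mod_group 2 \<times>\<times> integer_mod_group 2"
proof -
  have distinct: "a \<noteq> b" "a \<noteq> a \<otimes> b" "b \<noteq> a \<otimes> b"
    using assms by (auto simp flip: m_assoc)
  define coords where "coords x = ((if x = a \<or> x = a \<otimes> b then 1 else 0) :: int,
                                   (if x = b \<or> x = a \<otimes> b then 1 else 0) :: int)" for x
  have "coords \<in> hom (G\<lparr>carrier := {\<one>, a, b, a \<otimes> b}\<rparr>) (integer_mod_group 2 \<times>\<times> integer_mod_group 2)"
    using assms distinct commuting_involutions_products[OF a b aa bb comm]
    by (auto simp: hom_def coords_def carrier_integer_mod_group)
  moreover have "bij_betw coords {\<one>, a, b, a \<otimes> b} ({0..<2} \<times> {0..<2})"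
  proof -
    have "{0..<2::int} = {0, 1}" by auto
    then show ?thesis
      using assms distinct by (auto simp: bij_betw_def inj_on_def coords_def)
  qed
  ultimately have "coords \<in> iso (G\<lparr>carrier := {\<one>, a, b, a \<otimes> b}\<rparr>) (integer_mod_group 2 \<times>\<times> integer_mod_group 2)"
    by (simp add: iso_def carrier_integer_mod_group)
  then show ?thesis
    unfolding is_iso_def generate_commuting_involutions[OF a b aa bb comm] by blast
qed

lemma (in group) mult_inv_cancel_left: "x \<in> carrier G \<Longrightarrow> y \<in> carrier G \<Longrightarrow> x \<otimes> (inv x \<otimes> y) = y"
  by (simp flip: m_assoc)

lemma (in group) inv_mult_cancel_left: "x \<in> carrier G \<Longrightarrow> y \<in> carrier G \<Longrightarrow> inv x \<otimes> (x \<otimes> y) = y"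
  by (simp flip: m_assoc)

lemmas (in group) group_word_simps = m_assoc inv_mult_group mult_inv_cancel_left inv_mult_cancel_left

definition conj_closed :: "('a, 'b) monoid_scheme \<Rightarrow> 'a set \<Rightarrow> bool" where
  "conj_closed G C \<longleftrightarrow> (\<forall>h \<in> carrier G. \<forall>x \<in> C. h \<otimes>\<^bsub>G\<^esub> x \<otimes>\<^bsub>G\<^esub> inv\<^bsub>G\<^esub> h \<in> C)"

lemma (in group) is_conj_class_conj_closed:
  assumes "is_conj_class G C"
  shows "conj_closed G C"
  unfolding conj_closed_def
proof (intro ballI)
  fix h x assume h: "h \<in> carrier G" and "x \<in> C"
  obtain g where g: "g \<in> carrier G" and C: "C = conj_class G g"
    using assms by (auto simp: is_conj_class_def)
  then obtain k where k: "k \<in> carrier G" and x: "x = k \<otimes> g \<otimes> inv k"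
    using \<open>x \<in> C\<close> by (auto simp: conj_class_def)
  have "h \<otimes> x \<otimes> inv h = (h \<otimes> k) \<otimes> g \<otimes> inv (h \<otimes> k)"
    using h k g by (simp add: x group_word_simps)
  then show "h \<otimes> x \<otimes> inv h \<in> C"
    using h k by (auto simp: C conj_class_def)
qed

lemma (in group) conj_closed_inv_conj:
  assumes "conj_closed G C" "h \<in> carrier G" "x \<in> C"
  shows "inv h \<otimes> x \<otimes> h \<in> C"
  using assms inv_closed inv_inv unfolding conj_closed_def by metis

lemma (in group) generate_insert_conj:
  assumes x: "x \<in> carrier G" and y: "y \<in> carrier G" and V: "V \<subseteq> carrier G"
  shows "generate G (insert (x \<otimes> y \<otimes> inv x) (insert x V)) = generate G (insert y (insert x V))"
proof -
  have "generate G (insert (x \<otimes> y \<otimes> inv x) (insert x V)) \<subseteq> generate G (insert y (insert x V))"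
    using x y V
    by (intro generate_subgroup_incl generate_is_subgroup) (auto intro: generate.intros)
  moreover
  have "inv x \<otimes> (x \<otimes> y \<otimes> inv x) \<otimes> x \<in> generate G (insert (x \<otimes> y \<otimes> inv x) (insert x V))"
    by (auto intro: generate.intros)
  then have "y \<in> generate G (insert (x \<otimes> y \<otimes> inv x) (insert x V))"
    using x y by (simp add: group_word_simps)
  then have "generate G (insert y (insert x V)) \<subseteq> generate G (insert (x \<otimes> y \<otimes> inv x) (insert x V))"
    using x y V
    by (intro generate_subgroup_incl generate_is_subgroup) (auto intro: generate.intros)
  ultimately show ?thesis by (rule subset_antisym)
qed

abbreviation carrier4 :: "('a, 'b) monoid_scheme \<Rightarrow> 'a tuple4 set" where
  "carrier4 G \<equiv> carrier G \<times> carrier G \<times> carrier G \<times> carrier G"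

lemma Ni_subset_carrier4: "Ni G C1 C2 C3 C4 \<subseteq> carrier4 G"
  by (auto simp: Ni_def intro: generate.incl)

lemma (in group) hb2_Ni:
  assumes "s \<in> Ni G C1 C2 C3 C4" and "conj_closed G C2"
  shows "hb2 G s \<in> Ni G C2 C1 C3 C4"
proof -
  obtain a b c d where s: "s = (a, b, c, d)" by (cases s) auto
  have carrier: "a \<in> carrier G" "b \<in> carrier G" "c \<in> carrier G" "d \<in> carrier G"
    using subsetD[OF Ni_subset_carrier4 assms(1)] by (simp_all add: s)
  have "a \<otimes> b \<otimes> inv a \<in> C2"
    using assms carrier by (auto simp: s Ni_def conj_closed_def)
  moreover have "generate G {a \<otimes> b \<otimes> inv a, a, c, d} = generate G {a, b, c, d}"
    using generate_insert_conj[of a b "{c, d}"] carrier by (simp add: insert_commute group_word_simps)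
  ultimately show ?thesis
    using assms(1) carrier by (simp add: s Ni_def group_word_simps)
qed

lemma (in group) hb3_Ni:
  assumes "s \<in> Ni G C1 C2 C3 C4" and "conj_closed G C3"
  shows "hb3 G s \<in> Ni G C1 C3 C2 C4"
proof -
  obtain a b c d where s: "s = (a, b, c, d)" by (cases s) auto
  have carrier: "a \<in> carrier G" "b \<in> carrier G" "c \<in> carrier G" "d \<in> carrier G"
    using subsetD[OF Ni_subset_carrier4 assms(1)] by (simp_all add: s)
  have "b \<otimes> c \<otimes> inv b \<in> C3"
    using assms carrier by (auto simp: s Ni_def conj_closed_def)
  moreover have "generate G {a, b \<otimes> c \<otimes> inv b, b, d} = generate G {a, b, c, d}"
    using generate_insert_conj[of b c "{a, d}"] carrier by (simp add: insert_commute group_word_simps)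
  ultimately show ?thesis
    using assms(1) carrier by (simp add: s Ni_def group_word_simps)
qed

lemma (in group) hb4_Ni:
  assumes "s \<in> Ni G C1 C2 C3 C4" and "conj_closed G C4"
  shows "hb4 G s \<in> Ni G C1 C2 C4 C3"
proof -
  obtain a b c d where s: "s = (a, b, c, d)" by (cases s) auto
  have carrier: "a \<in> carrier G" "b \<in> carrier G" "c \<in> carrier G" "d \<in> carrier G"
    using subsetD[OF Ni_subset_carrier4 assms(1)] by (simp_all add: s)
  have "c \<otimes> d \<otimes> inv c \<in> C4"
    using assms carrier by (auto simp: s Ni_def conj_closed_def)
  moreover have "generate G {a, b, c \<otimes> d \<otimes> inv c, c} = generate G {a, b, c, d}"
    using generate_insert_conj[of c d "{a, b}"] carrier by (simp add: insert_commute group_word_simps)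
  ultimately show ?thesis
    using assms(1) carrier by (simp add: s Ni_def group_word_simps)
qed

lemma (in group) hb2inv_Ni:
  assumes "s \<in> Ni G C1 C2 C3 C4" and "conj_closed G C1"
  shows "hb2inv G s \<in> Ni G C2 C1 C3 C4"
proof -
  obtain a b c d where s: "s = (a, b, c, d)" by (cases s) auto
  have carrier: "a \<in> carrier G" "b \<in> carrier G" "c \<in> carrier G" "d \<in> carrier G"
    using subsetD[OF Ni_subset_carrier4 assms(1)] by (simp_all add: s)
  have "inv b \<otimes> a \<otimes> b \<in> C1"
    using assms carrier by (auto simp: s Ni_def intro: conj_closed_inv_conj)
  moreover have "generate G {b, inv b \<otimes> a \<otimes> b, c, d} = generate G {a, b, c, d}"
    using generate_insert_conj[of b "inv b \<otimes> a \<otimes> b" "{c, d}"] carrier by (simp add: insert_commute group_word_simps)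
  ultimately show ?thesis
    using assms(1) carrier by (simp add: s Ni_def group_word_simps)
qed

lemma (in group) hb3inv_Ni:
  assumes "s \<in> Ni G C1 C2 C3 C4" and "conj_closed G C2"
  shows "hb3inv G s \<in> Ni G C1 C3 C2 C4"
proof -
  obtain a b c d where s: "s = (a, b, c, d)" by (cases s) auto
  have carrier: "a \<in> carrier G" "b \<in> carrier G" "c \<in> carrier G" "d \<in> carrier G"
    using subsetD[OF Ni_subset_carrier4 assms(1)] by (simp_all add: s)
  have "inv c \<otimes> b \<otimes> c \<in> C2"
    using assms carrier by (auto simp: s Ni_def intro: conj_closed_inv_conj)
  moreover have "generate G {a, c, inv c \<otimes> b \<otimes> c, d} = generate G {a, b, c, d}"
    using generate_insert_conj[of c "inv c \<otimes> b \<otimes> c" "{a, d}"] carrier by (simp add: insert_commute group_word_simps)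
  ultimately show ?thesis
    using assms(1) carrier by (simp add: s Ni_def group_word_simps)
qed

lemma (in group) hb_carrier4:
  "hb2 G ` carrier4 G \<subseteq> carrier4 G" "hb3 G ` carrier4 G \<subseteq> carrier4 G"
  "hb4 G ` carrier4 G \<subseteq> carrier4 G" "hb2inv G ` carrier4 G \<subseteq> carrier4 G"
  "hb3inv G ` carrier4 G \<subseteq> carrier4 G"
  by auto

lemma (in group) inj_on_hb:
  "inj_on (hb2 G) (carrier4 G)" "inj_on (hb3 G) (carrier4 G)" "inj_on (hb4 G) (carrier4 G)"
  "inj_on (hb2inv G) (carrier4 G)" "inj_on (hb3inv G) (carrier4 G)"
  by (auto simp: inj_on_def m_assoc)

lemma inj_on_comp_endo:
  assumes "inj_on f A" "inj_on g A" "g ` A \<subseteq> A"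
  shows "inj_on (f \<circ> g) A"
  using assms comp_inj_on inj_on_subset by blast

lemma pb_as_hb_comp:
  "pb12 G = hb2 G \<circ> hb2 G"
  "pb13 G = hb2 G \<circ> hb3 G \<circ> hb3 G \<circ> hb2inv G"
  "pb14 G = hb2 G \<circ> hb3 G \<circ> hb4 G \<circ> hb4 G \<circ> hb3inv G \<circ> hb2inv G"
  "pb23 G = hb3 G \<circ> hb3 G"
  "pb24 G = hb3 G \<circ> hb4 G \<circ> hb4 G \<circ> hb3inv G"
  "pb34 G = hb4 G \<circ> hb4 G"
  by (simp_all add: fun_eq_iff pb12_def pb13_def pb14_def pb23_def pb24_def pb34_def)

lemma (in group) inj_on_pb:
  "inj_on (pb12 G) (carrier4 G)" "inj_on (pb13 G) (carrier4 G)" "inj_on (pb14 G) (carrier4 G)"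
  "inj_on (pb23 G) (carrier4 G)" "inj_on (pb24 G) (carrier4 G)" "inj_on (pb34 G) (carrier4 G)"
  unfolding pb_as_hb_comp using inj_on_hb hb_carrier4
  by (auto intro!: inj_on_comp_endo simp: image_comp[symmetric] image_subset_iff)

lemma (in group) pb_Ni:
  assumes "s \<in> Ni G C1 C2 C3 C4"
    and "conj_closed G C1" "conj_closed G C2" "conj_closed G C3" "conj_closed G C4"
  shows "pb12 G s \<in> Ni G C1 C2 C3 C4" "pb13 G s \<in> Ni G C1 C2 C3 C4"
    "pb14 G s \<in> Ni G C1 C2 C3 C4" "pb23 G s \<in> Ni G C1 C2 C3 C4"
    "pb24 G s \<in> Ni G C1 C2 C3 C4" "pb34 G s \<in> Ni G C1 C2 C3 C4"
  unfolding pb12_def pb13_def pb14_def pb23_def pb24_def pb34_def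
  using assms by (intro hb2_Ni hb3_Ni hb4_Ni hb2inv_Ni hb3inv_Ni; simp)+

lemma (in group) pb_tconj:
  assumes "h \<in> carrier G" "s \<in> carrier4 G"
  shows "pb12 G (tconj G h s) = tconj G h (pb12 G s)" "pb13 G (tconj G h s) = tconj G h (pb13 G s)"
    "pb14 G (tconj G h s) = tconj G h (pb14 G s)" "pb23 G (tconj G h s) = tconj G h (pb23 G s)"
    "pb24 G (tconj G h s) = tconj G h (pb24 G s)" "pb34 G (tconj G h s) = tconj G h (pb34 G s)"
  using assms
  by (auto simp: pb12_def pb13_def pb14_def pb23_def pb24_def pb34_def group_word_simps)

lemma (in group) pb34_conj_pb12:
  assumes "a \<in> carrier G" "b \<in> carrier G" "c \<in> carrier G"
  shows "pb34 G (a, b, c, inv (a \<otimes> b \<otimes> c)) = tconj G (inv (a \<otimes> b)) (pb12 G (a, b, c, inv (a \<otimes> b \<otimes> c)))"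
  using assms by (simp add: pb12_def pb34_def group_word_simps)

lemma (in group) pb23_conj_pb14:
  assumes "a \<in> carrier G" "b \<in> carrier G" "c \<in> carrier G"
  shows "pb23 G (a, b, c, inv (a \<otimes> b \<otimes> c)) = tconj G (b \<otimes> c) (pb14 G (a, b, c, inv (a \<otimes> b \<otimes> c)))"
  using assms by (simp add: pb14_def pb23_def group_word_simps)

lemma (in group) pb12_pb24_conj_pb13_pb12:
  assumes "a \<in> carrier G" "b \<in> carrier G" "c \<in> carrier G"
  shows "pb12 G (pb24 G (a, b, c, inv (a \<otimes> b \<otimes> c)))
    = tconj G (inv c \<otimes> inv a) (pb13 G (pb12 G (a, b, c, inv (a \<otimes> b \<otimes> c))))"
  using assms by (simp add: pb12_def pb13_def pb24_def group_word_simps)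

lemma (in group) pb14_pb13_pb12_conj:
  assumes "a \<in> carrier G" "b \<in> carrier G" "c \<in> carrier G"
  shows "pb14 G (pb13 G (pb12 G (a, b, c, inv (a \<otimes> b \<otimes> c)))) = tconj G a (a, b, c, inv (a \<otimes> b \<otimes> c))"
  using assms by (simp add: pb12_def pb13_def pb14_def group_word_simps)

lemma (in group) Ni_eq_product_inv:
  assumes "s \<in> Ni G C1 C2 C3 C4"
  obtains a b c where "a \<in> carrier G" "b \<in> carrier G" "c \<in> carrier G" "s = (a, b, c, inv (a \<otimes> b \<otimes> c))"
proof -
  obtain a b c d where s: "s = (a, b, c, d)" by (cases s) auto
  have carrier: "a \<in> carrier G" "b \<in> carrier G" "c \<in> carrier G" "d \<in> carrier G"
    using subsetD[OF Ni_subset_carrier4 assms] by (simp_all add: s)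
  moreover have "a \<otimes> b \<otimes> c \<otimes> d = \<one>"
    using assms by (simp add: s Ni_def)
  then have "d = inv (a \<otimes> b \<otimes> c)"
    using carrier by (metis inv_comm inv_equality m_closed)
  ultimately show ?thesis
    using that s by blast
qed

lemma image_tclass:
  assumes "\<And>h. h \<in> carrier G \<Longrightarrow> f (tconj G h s) = tconj G h (f s)"
  shows "f ` tclass G s = tclass G (f s)"
  unfolding tclass_def image_image using assms by simp

lemma (in group) tconj_tconj:
  assumes "h \<in> carrier G" "k \<in> carrier G" "s \<in> carrier4 G"
  shows "tconj G k (tconj G h s) = tconj G (k \<otimes> h) s"
  using assms by (cases s) (simp add: group_word_simps)

lemma (in group) carrier_mult_right: "h \<in> carrier G \<Longrightarrow> (\<lambda>k. k \<otimes> h) ` carrier G = carrier G"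
proof (intro equalityI subsetI)
  fix k assume "h \<in> carrier G" "k \<in> carrier G"
  then have "k = (k \<otimes> inv h) \<otimes> h" "k \<otimes> inv h \<in> carrier G"
    by (simp_all add: m_assoc)
  then show "k \<in> (\<lambda>k. k \<otimes> h) ` carrier G" by blast
qed auto

lemma (in group) tclass_tconj:
  assumes "h \<in> carrier G" "s \<in> carrier4 G"
  shows "tclass G (tconj G h s) = tclass G s"
proof -
  have "tclass G (tconj G h s) = (\<lambda>k. tconj G (k \<otimes> h) s) ` carrier G"
    unfolding tclass_def using assms by (intro image_cong) (simp_all add: tconj_tconj)
  also have "\<dots> = (\<lambda>k. tconj G k s) ` ((\<lambda>k. k \<otimes> h) ` carrier G)"
    by (simp only: image_image)
  finally show ?thesis
    using assms(1) by (simp add: carrier_mult_right tclass_def)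
qed

lemma rho_in_Bij:
  assumes "finite S" and "\<And>Y. Y \<in> S \<Longrightarrow> f ` Y \<in> S" and "inj_on f (\<Union>S)"
  shows "rho S f \<in> Bij S"
proof -
  have inj: "inj_on (image f) S"
    using inj_on_image_eq_iff[OF assms(3) Union_upper Union_upper] by (auto simp: inj_on_def)
  then have "image f ` S = S"
    using assms(1,2) by (intro endo_inj_surj) auto
  with inj show ?thesis
    by (simp add: Bij_def rho_def bij_betw_def)
qed

lemma BijGroup_mult: "x \<in> Bij S \<Longrightarrow> y \<in> Bij S \<Longrightarrow> x \<otimes>\<^bsub>BijGroup S\<^esub> y = compose S x y"
  by (simp add: BijGroup_def)

lemma BijGroup_one: "\<one>\<^bsub>BijGroup S\<^esub> = (\<lambda>x\<in>S. x)"
  by (simp add: BijGroup_def)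

lemma BijGroup_carrier: "carrier (BijGroup S) = Bij S"
  by (simp add: BijGroup_def)

locale class_vector = group G for G :: "('a, 'b) monoid_scheme" (structure) +
  fixes C1 C2 C3 C4 :: "'a set"
  assumes finite_carrier: "finite (carrier G)"
    and conj_closed: "conj_closed G C1" "conj_closed G C2" "conj_closed G C3" "conj_closed G C4"
begin

abbreviation N :: "'a tuple4 set" where "N \<equiv> Ni G C1 C2 C3 C4"
abbreviation S :: "'a tuple4 set set" where "S \<equiv> Sigma_i G C1 C2 C3 C4"

lemmas Ni_closed_pb = pb_Ni[OF _ conj_closed]

lemma tclass_in_S: "s \<in> N \<Longrightarrow> tclass G s \<in> S"
  by (simp add: Sigma_i_def)

lemma finite_S: "finite S"
proof -
  have "finite N"
    using finite_carrier Ni_subset_carrier4 by (metis finite_SigmaI finite_subset)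
  then show ?thesis
    by (simp add: Sigma_i_def)
qed

lemma Union_S_subset_carrier4: "\<Union>S \<subseteq> carrier4 G"
  using Ni_subset_carrier4 by (fastforce simp: Sigma_i_def tclass_def)

lemma rho_tclass:
  assumes "\<And>h. h \<in> carrier G \<Longrightarrow> f (tconj G h s) = tconj G h (f s)" and "s \<in> N"
  shows "rho S f (tclass G s) = tclass G (f s)"
  using assms by (simp add: rho_def tclass_in_S image_tclass)

lemma rho_in_Bij_if_equivariant:
  assumes "\<And>h s. h \<in> carrier G \<Longrightarrow> s \<in> carrier4 G \<Longrightarrow> f (tconj G h s) = tconj G h (f s)"
    and "\<And>s. s \<in> N \<Longrightarrow> f s \<in> N" and "inj_on f (carrier4 G)"
  shows "rho S f \<in> Bij S"
proof (rule rho_in_Bij[OF finite_S])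
  fix Y assume "Y \<in> S"
  then obtain s where s: "s \<in> N" and Y: "Y = tclass G s"
    by (auto simp: Sigma_i_def)
  have "f ` Y = tclass G (f s)"
    unfolding Y using assms(1) subsetD[OF Ni_subset_carrier4 s] by (intro image_tclass)
  then show "f ` Y \<in> S"
    using assms(2) s by (simp add: tclass_in_S)
qed (use assms(3) Union_S_subset_carrier4 inj_on_subset in blast)

lemma rho_pb_tclass:
  assumes "s \<in> N"
  shows "rho S (pb12 G) (tclass G s) = tclass G (pb12 G s)"
    "rho S (pb13 G) (tclass G s) = tclass G (pb13 G s)"
    "rho S (pb14 G) (tclass G s) = tclass G (pb14 G s)"
    "rho S (pb23 G) (tclass G s) = tclass G (pb23 G s)"
    "rho S (pb24 G) (tclass G s) = tclass G (pb24 G s)"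
    "rho S (pb34 G) (tclass G s) = tclass G (pb34 G s)"
  using assms subsetD[OF Ni_subset_carrier4 assms] by (simp_all add: rho_tclass pb_tconj)

lemma rho_pb_Bij:
  "rho S (pb12 G) \<in> Bij S" "rho S (pb13 G) \<in> Bij S" "rho S (pb14 G) \<in> Bij S"
  "rho S (pb23 G) \<in> Bij S" "rho S (pb24 G) \<in> Bij S" "rho S (pb34 G) \<in> Bij S"
  by (simp_all add: rho_in_Bij_if_equivariant pb_tconj Ni_closed_pb inj_on_pb)

lemma eq_on_tclassI:
  assumes "f \<in> extensional S" "g \<in> extensional S"
    and "\<And>s. s \<in> N \<Longrightarrow> f (tclass G s) = g (tclass G s)"
  shows "f = g"
  using assms by (auto intro: extensionalityI simp: Sigma_i_def)

lemma pb_carrier4: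
  assumes "s \<in> N"
  shows "pb12 G s \<in> carrier4 G" "pb13 G s \<in> carrier4 G" "pb14 G s \<in> carrier4 G"
    "pb23 G s \<in> carrier4 G" "pb24 G s \<in> carrier4 G" "pb34 G s \<in> carrier4 G"
  using Ni_closed_pb[OF assms] Ni_subset_carrier4 by blast+

lemma rho_pb34: "rho S (pb34 G) = rho S (pb12 G)"
proof (rule eq_on_tclassI)
  fix s assume s: "s \<in> N"
  then obtain a b c where "a \<in> carrier G" "b \<in> carrier G" "c \<in> carrier G"
    and "s = (a, b, c, inv (a \<otimes> b \<otimes> c))" by (rule Ni_eq_product_inv)
  then show "rho S (pb34 G) (tclass G s) = rho S (pb12 G) (tclass G s)"
    using s pb_carrier4[OF s] by (simp add: rho_pb_tclass pb34_conj_pb12 tclass_tconj)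
qed (simp_all add: rho_def)

lemma rho_pb23: "rho S (pb23 G) = rho S (pb14 G)"
proof (rule eq_on_tclassI)
  fix s assume s: "s \<in> N"
  then obtain a b c where "a \<in> carrier G" "b \<in> carrier G" "c \<in> carrier G"
    and "s = (a, b, c, inv (a \<otimes> b \<otimes> c))" by (rule Ni_eq_product_inv)
  then show "rho S (pb23 G) (tclass G s) = rho S (pb14 G) (tclass G s)"
    using s pb_carrier4[OF s] by (simp add: rho_pb_tclass pb23_conj_pb14 tclass_tconj)
qed (simp_all add: rho_def)

lemma rho_pb24:
  "rho S (pb12 G) \<otimes>\<^bsub>BijGroup S\<^esub> rho S (pb24 G) = rho S (pb13 G) \<otimes>\<^bsub>BijGroup S\<^esub> rho S (pb12 G)"
  unfolding BijGroup_mult[OF rho_pb_Bij(1,5)] BijGroup_mult[OF rho_pb_Bij(2,1)]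
proof (rule eq_on_tclassI)
  fix s assume s: "s \<in> N"
  then obtain a b c where "a \<in> carrier G" "b \<in> carrier G" "c \<in> carrier G"
    and "s = (a, b, c, inv (a \<otimes> b \<otimes> c))" by (rule Ni_eq_product_inv)
  then show "compose S (rho S (pb12 G)) (rho S (pb24 G)) (tclass G s)
    = compose S (rho S (pb13 G)) (rho S (pb12 G)) (tclass G s)"
    using s Ni_closed_pb[OF s] pb_carrier4[OF Ni_closed_pb(1)[OF s]]
    by (simp add: compose_eq tclass_in_S rho_pb_tclass pb12_pb24_conj_pb13_pb12 tclass_tconj)
qed (simp_all add: compose_extensional)

lemma rho_pb14_pb13_pb12:
  "rho S (pb14 G) \<otimes>\<^bsub>BijGroup S\<^esub> (rho S (pb13 G) \<otimes>\<^bsub>BijGroup S\<^esub> rho S (pb12 G)) = \<one>\<^bsub>BijGroup S\<^esub>"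
  unfolding BijGroup_mult[OF rho_pb_Bij(2,1)] BijGroup_mult[OF rho_pb_Bij(3) compose_Bij[OF rho_pb_Bij(2,1)]]
    BijGroup_one
proof (rule eq_on_tclassI)
  fix s assume s: "s \<in> N"
  then obtain a b c where "a \<in> carrier G" "b \<in> carrier G" "c \<in> carrier G"
    and "s = (a, b, c, inv (a \<otimes> b \<otimes> c))" by (rule Ni_eq_product_inv)
  then show "compose S (rho S (pb14 G)) (compose S (rho S (pb13 G)) (rho S (pb12 G))) (tclass G s)
    = (\<lambda>x\<in>S. x) (tclass G s)"
    using s Ni_closed_pb[OF s] Ni_closed_pb[OF Ni_closed_pb(1)[OF s]] subsetD[OF Ni_subset_carrier4 s]
    by (simp add: compose_eq tclass_in_S rho_pb_tclass pb14_pb13_pb12_conj tclass_tconj del: tconj.simps)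
qed (simp_all add: compose_extensional)

theorem rho4_image_iso_Klein:
  assumes "group.ord (BijGroup S) (rho S (pb12 G)) = 2"
    and "group.ord (BijGroup S) (rho S (pb13 G)) = 2"
    and "group.ord (BijGroup S) (rho S (pb14 G)) = 2"
  shows "rho4_image G C1 C2 C3 C4 \<cong> integer_mod_group 2 \<times>\<times> integer_mod_group 2"
proof -
  interpret Sym: group "BijGroup S" by (rule group_BijGroup)
  define r12 r13 r14 where "r12 = rho S (pb12 G)" and "r13 = rho S (pb13 G)" and "r14 = rho S (pb14 G)"
  have carrier: "r12 \<in> carrier (BijGroup S)" "r13 \<in> carrier (BijGroup S)" "r14 \<in> carrier (BijGroup S)"
    "rho S (pb24 G) \<in> carrier (BijGroup S)"
    by (simp_all add: r12_def r13_def r14_def BijGroup_carrier rho_pb_Bij)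
  note involution = Sym.ord_eq_2D[OF carrier(1) assms(1)[folded r12_def]]
    Sym.ord_eq_2D[OF carrier(2) assms(2)[folded r13_def]]
    Sym.ord_eq_2D[OF carrier(3) assms(3)[folded r14_def]]
  have r14: "r14 = r12 \<otimes>\<^bsub>BijGroup S\<^esub> r13"
    and comm: "r12 \<otimes>\<^bsub>BijGroup S\<^esub> r13 = r13 \<otimes>\<^bsub>BijGroup S\<^esub> r12"
    using Sym.involutions_with_product_one[OF carrier(1-3) involution(1,3,5)]
      rho_pb14_pb13_pb12 by (simp_all add: r12_def r13_def r14_def)
  have "r12 \<otimes>\<^bsub>BijGroup S\<^esub> rho S (pb24 G) = r12 \<otimes>\<^bsub>BijGroup S\<^esub> r13"
    using rho_pb24 comm by (simp add: r12_def r13_def)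
  then have r24: "rho S (pb24 G) = r13"
    using carrier by simp
  have "rho4_gens G C1 C2 C3 C4 = {r12, r13, r12 \<otimes>\<^bsub>BijGroup S\<^esub> r13}"
    using rho_pb34 rho_pb23 r24 r14 by (auto simp: rho4_gens_def Let_def r12_def r13_def r14_def)
  then show ?thesis
    unfolding rho4_image_def Let_def
    using Sym.generate_commuting_involutions_iso[OF carrier(1,2) involution(1,3) comm]
      involution(2,4,6) r14 by simp
qed

end

theorem corollary3:
  fixes G :: "('a, 'b) monoid_scheme" and C1 C2 C3 C4 :: "'a set"
  assumes "group G" and "finite (carrier G)"
    and "nontrivial_conj_class G C1" and "nontrivial_conj_class G C2"
    and "nontrivial_conj_class G C3" and "nontrivial_conj_class G C4"
    and "group.ord (BijGroup (Sigma_i G C1 C2 C3 C4)) (rho (Sigma_i G C1 C2 C3 C4) (pb12 G)) = 2"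
    and "group.ord (BijGroup (Sigma_i G C1 C2 C3 C4)) (rho (Sigma_i G C1 C2 C3 C4) (pb13 G)) = 2"
    and "group.ord (BijGroup (Sigma_i G C1 C2 C3 C4)) (rho (Sigma_i G C1 C2 C3 C4) (pb14 G)) = 2"
  shows "rho4_image G C1 C2 C3 C4 \<cong> integer_mod_group 2 \<times>\<times> integer_mod_group 2"
proof -
  interpret group G by (fact assms(1))
  interpret class_vector G C1 C2 C3 C4
    using assms(2-6) by unfold_locales (auto simp: nontrivial_conj_class_def is_conj_class_conj_closed)
  show ?thesis
    using assms(7-9) by (rule rho4_image_iso_Klein)
qed

end
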